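(* Let $\{B(X)\}_{X\in\mathbb R^2}$ be a Brownian motion indexed by $(\mathbb R^2,d_1)$ with root $0$, i.e. a centered Gaussian process with $B(0)=0$ and $\mathrm{Cov}(B(X),B(Y))=\tfrac12\big(d_1(0,X)+d_1(0,Y)-d_1(X,Y)\big)$. Let $A_1,\ldots,A_n\in\mathbb R^2$. Then there exist a permutation $\sigma$ of $\{1,\ldots,n\}$, an integer $q\ge1$ and positive integers $n_1,\ldots,n_q$ with $n_1+\cdots+n_q=n$ such that, setting $N_0=0$ and $N_l=n_1+\cdots+n_l$, the random vectors $V_l=\big(B(A_{\sigma(N_{l-1}+1)}),\ldots,B(A_{\sigma(N_l)})\big)$, $l=1,\ldots,q$, are mutually independent, and for each $l$ the vector $V_l$ has independent increments, i.e. the random variables $B(A_{\sigma(N_{l-1}+1)})$ and $B(A_{\sigma(j+1)})-B(A_{\sigma(j)})$ for $N_{l-1}+1\le j<N_l$ are mutually independent.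
   Context: $|\cdot|$ is the Euclidean norm. The radial metric on $\mathbb R^2$ is $d_1(A,B)=|A-B|$ if $A=aB$ for some $a\in\mathbb R$, and $d_1(A,B)=|A|+|B|$ otherwise. *)

theory Defs
  imports "HOL-Probability.Probability" "HOL-Combinatorics.Permutations"
begin

definition radial_dist :: "real^2 \<Rightarrow> real^2 \<Rightarrow> real" where
  "radial_dist A B = (if \<exists>a::real. A = a *\<^sub>R B then norm (A - B) else norm A + norm B)"

definition centered_gaussian_rv :: "'a measure \<Rightarrow> ('a \<Rightarrow> real) \<Rightarrow> real \<Rightarrow> bool" where
  "centered_gaussian_rv M X v \<longleftrightarrow>
     X \<in> borel_measurable M \<and> v \<ge> 0 \<and>
     (if v = 0 then (AE \<omega> in M. X \<omega> = 0)
      else distributed M lborel X (normal_density 0 (sqrt v)))"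

definition centered_gaussian_process ::
    "'a measure \<Rightarrow> ('i \<Rightarrow> 'a \<Rightarrow> real) \<Rightarrow> ('i \<Rightarrow> 'i \<Rightarrow> real) \<Rightarrow> bool" where
  "centered_gaussian_process M B K \<longleftrightarrow>
     prob_space M \<and> (\<forall>X. B X \<in> borel_measurable M) \<and>
     (\<forall>(m::nat) (P::nat \<Rightarrow> 'i) (c::nat \<Rightarrow> real).
        centered_gaussian_rv M (\<lambda>\<omega>. \<Sum>i<m. c i * B (P i) \<omega>)
          (\<Sum>i<m. \<Sum>j<m. c i * c j * K (P i) (P j)))"

definition radial_brownian_motion :: "'a measure \<Rightarrow> (real^2 \<Rightarrow> 'a \<Rightarrow> real) \<Rightarrow> bool" where
  "radial_brownian_motion M B \<longleftrightarrow>
     centered_gaussian_process M B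
       (\<lambda>X Y. (radial_dist 0 X + radial_dist 0 Y - radial_dist X Y) / 2) \<and>
     (AE \<omega> in M. B 0 \<omega> = 0)"

end

theory Submission
  imports Defs "HOL-Library.List_Lexorder"
begin

text \<open>
  For the radial metric the covariance of \<open>B\<close> is \<open>min (|X|, |Y|)\<close> when \<open>X\<close> and \<open>Y\<close> point in
  the same direction and \<open>0\<close> otherwise: along each ray \<open>B\<close> is a Brownian motion in \<open>|X|\<close>, and
  different rays are uncorrelated. Sort the points by direction and, within a direction, by norm.
  Then the value at the first point of each ray together with the increments along the rays are
  pairwise uncorrelated and jointly Gaussian, hence independent; the blocks of the partition are
  the rays, and each block is a function of its own increments.

  That uncorrelated jointly Gaussian variables are independent is derived from the factorization
  of their joint characteristic function, by induction on the number of variables: conditioning on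
  an event \<open>{Z\<^sub>y \<in> B}\<close> does not change the characteristic function of the remaining variables,
  hence by Levy's uniqueness theorem not their laws. The conditioning step itself rests on the
  same principle, applied to reweighting by the normalized densities \<open>2 + cos S\<close> and \<open>2 + sin S\<close>.
\<close>

section \<open>Independence from factorizing characteristic functions\<close>

definition char_rv :: "'a measure \<Rightarrow> ('a \<Rightarrow> real) \<Rightarrow> complex" where
  "char_rv N X = (CLINT \<omega>|N. iexp (X \<omega>))"

lemma (in prob_space) integrable_iexp:
  assumes [measurable]: "X \<in> borel_measurable M"
  shows "integrable M (\<lambda>\<omega>. iexp (X \<omega>))"
  by (intro integrable_const_bound[where B=1]) (auto simp: norm_exp_i_times)

lemma (in prob_space) char_rv_zero: "char_rv M (\<lambda>_. 0) = 1"
  by (simp add: char_rv_def prob_space)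

lemma distr_eq_if_char_rv_eq:
  assumes "prob_space N1" "prob_space N2"
    and "X1 \<in> borel_measurable N1" "X2 \<in> borel_measurable N2"
    and "\<And>t. char_rv N1 (\<lambda>\<omega>. t * X1 \<omega>) = char_rv N2 (\<lambda>\<omega>. t * X2 \<omega>)"
  shows "distr N1 borel X1 = distr N2 borel X2"
proof (rule Levy_uniqueness)
  show "real_distribution (distr N1 borel X1)" "real_distribution (distr N2 borel X2)"
    using assms prob_space.real_distribution_distr by auto
  show "char (distr N1 borel X1) = char (distr N2 borel X2)"
    using assms by (auto simp: char_def char_rv_def integral_distr)
qed

lemma prob_vimage_eq_if_char_rv_eq:
  assumes "prob_space N1" "prob_space N2"
    and "X1 \<in> borel_measurable N1" "X2 \<in> borel_measurable N2"
    and "\<And>t. char_rv N1 (\<lambda>\<omega>. t * X1 \<omega>) = char_rv N2 (\<lambda>\<omega>. t * X2 \<omega>)"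
    and "A \<in> sets borel"
  shows "measure N1 {\<omega>\<in>space N1. X1 \<omega> \<in> A} = measure N2 {\<omega>\<in>space N2. X2 \<omega> \<in> A}"
proof -
  have "measure N1 {\<omega>\<in>space N1. X1 \<omega> \<in> A} = measure (distr N1 borel X1) A"
    using assms by (simp add: measure_distr vimage_def Int_def conj_commute)
  also have "\<dots> = measure (distr N2 borel X2) A"
    using distr_eq_if_char_rv_eq[OF assms(1-5)] by simp
  also have "\<dots> = measure N2 {\<omega>\<in>space N2. X2 \<omega> \<in> A}"
    using assms by (simp add: measure_distr vimage_def Int_def conj_commute)
  finally show ?thesis .
qed

definition tilt :: "'a measure \<Rightarrow> ('a \<Rightarrow> real) \<Rightarrow> 'a measure" where
  "tilt M h = density M (\<lambda>\<omega>. (2 + h \<omega>) / (2 + integral\<^sup>L M h))"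

lemma (in prob_space) tilt_normalizer_pos:
  fixes h :: "'a \<Rightarrow> real"
  assumes [measurable]: "h \<in> borel_measurable M" and "\<And>\<omega>. \<omega> \<in> space M \<Longrightarrow> \<bar>h \<omega>\<bar> \<le> 1"
  shows "0 < 2 + expectation h"
proof -
  have "integrable M h"
    using assms by (intro integrable_const_bound[where B=1]) auto
  moreover have "0 \<le> expectation (\<lambda>\<omega>. 1 + h \<omega>)"
    using assms(2) by (intro integral_nonneg_AE AE_I2) (fastforce simp: abs_le_iff)
  ultimately show ?thesis
    by (simp add: prob_space)
qed

lemma (in prob_space) prob_space_tilt:
  assumes [measurable]: "h \<in> borel_measurable M" and "\<And>\<omega>. \<omega> \<in> space M \<Longrightarrow> \<bar>h \<omega>\<bar> \<le> 1"
  shows "prob_space (tilt M h)"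
proof (rule prob_spaceI)
  let ?c = "2 + expectation h"
  have "0 < ?c" "integrable M h"
    using assms tilt_normalizer_pos by (auto intro!: integrable_const_bound[where B=1])
  have nonneg: "0 \<le> (2 + h \<omega>) / ?c" if "\<omega> \<in> space M" for \<omega>
    using assms(2)[OF that] \<open>0 < ?c\<close> by (auto simp: abs_le_iff)
  have "emeasure (tilt M h) (space M) = (\<integral>\<^sup>+ \<omega>. ennreal ((2 + h \<omega>) / ?c) \<partial>M)"
    by (auto simp: tilt_def emeasure_density intro!: nn_integral_cong)
  also have "\<dots> = ennreal (LINT \<omega>|M. (2 + h \<omega>) / ?c)"
    using \<open>integrable M h\<close> nonneg by (intro nn_integral_eq_integral) auto
  also have "\<dots> = 1"
    using \<open>0 < ?c\<close> \<open>integrable M h\<close> by (simp add: prob_space)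
  finally show "emeasure (tilt M h) (space (tilt M h)) = 1"
    by (simp add: tilt_def)
qed

lemma (in prob_space) integral_tilt:
  fixes f :: "'a \<Rightarrow> 'b::{banach, second_countable_topology}"
  assumes [measurable]: "h \<in> borel_measurable M" "f \<in> borel_measurable M"
    and "\<And>\<omega>. \<omega> \<in> space M \<Longrightarrow> \<bar>h \<omega>\<bar> \<le> 1"
    and "integrable M f" "integrable M (\<lambda>\<omega>. h \<omega> *\<^sub>R f \<omega>)"
  shows "integral\<^sup>L (tilt M h) f
    = (1 / (2 + expectation h)) *\<^sub>R (2 *\<^sub>R integral\<^sup>L M f + (LINT \<omega>|M. h \<omega> *\<^sub>R f \<omega>))"
proof -
  let ?c = "2 + expectation h"
  have "0 < ?c"
    using assms tilt_normalizer_pos by auto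
  then have "0 \<le> (2 + h \<omega>) / ?c" if "\<omega> \<in> space M" for \<omega>
    using assms(3)[OF that] by (auto simp: abs_le_iff)
  then have "integral\<^sup>L (tilt M h) f = (LINT \<omega>|M. ((2 + h \<omega>) / ?c) *\<^sub>R f \<omega>)"
    unfolding tilt_def by (intro integral_density) auto
  also have "\<dots> = (LINT \<omega>|M. (1 / ?c) *\<^sub>R (2 *\<^sub>R f \<omega> + h \<omega> *\<^sub>R f \<omega>))"
    by (intro Bochner_Integration.integral_cong) (auto simp: scaleR_add_right add_divide_distrib
        simp flip: scaleR_add_left)
  also have "\<dots> = (1 / ?c) *\<^sub>R (2 *\<^sub>R integral\<^sup>L M f + (LINT \<omega>|M. h \<omega> *\<^sub>R f \<omega>))"
    using assms(4,5) by simp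
  finally show ?thesis .
qed

lemma (in prob_space) integral_mult_indicator_eq_if_integral_mult_iexp:
  assumes [measurable]: "Y \<in> borel_measurable M" "h \<in> borel_measurable M" "A \<in> sets borel"
    and h_bounded: "\<And>\<omega>. \<omega> \<in> space M \<Longrightarrow> \<bar>h \<omega>\<bar> \<le> 1"
    and h_iexp: "\<And>u. (CLINT \<omega>|M. of_real (h \<omega>) * iexp (u * Y \<omega>))
                    = of_real (expectation h) * char_rv M (\<lambda>\<omega>. u * Y \<omega>)"
  shows "(LINT \<omega>|M. h \<omega> * indicator A (Y \<omega>)) = expectation h * prob {\<omega>\<in>space M. Y \<omega> \<in> A}"
proof -
  let ?c = "2 + expectation h" and ?F = "{\<omega>\<in>space M. Y \<omega> \<in> A}"
  have "0 < ?c"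
    using h_bounded tilt_normalizer_pos by auto
  have bounded: "integrable M f" if "f \<in> borel_measurable M" "\<And>\<omega>. \<omega> \<in> space M \<Longrightarrow> norm (f \<omega>) \<le> 1"
    for f :: "'a \<Rightarrow> 'b::{banach, second_countable_topology}"
    using that by (intro integrable_const_bound[where B=1]) auto
  \<comment> \<open>The tilted law of \<open>Y\<close> has the same characteristic function, hence is the law of \<open>Y\<close>.\<close>
  have "char_rv (tilt M h) (\<lambda>\<omega>. t * Y \<omega>) = char_rv M (\<lambda>\<omega>. t * Y \<omega>)" for t
  proof -
    have "char_rv (tilt M h) (\<lambda>\<omega>. t * Y \<omega>)
        = (1 / ?c) *\<^sub>R (2 *\<^sub>R char_rv M (\<lambda>\<omega>. t * Y \<omega>) + (CLINT \<omega>|M. h \<omega> *\<^sub>R iexp (t * Y \<omega>)))"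
      unfolding char_rv_def using h_bounded by (intro integral_tilt) (auto intro!: bounded)
    also have "(CLINT \<omega>|M. h \<omega> *\<^sub>R iexp (t * Y \<omega>)) = of_real (expectation h) * char_rv M (\<lambda>\<omega>. t * Y \<omega>)"
      using h_iexp[of t] by (simp add: scaleR_conv_of_real)
    also have "complex_of_real ?c \<noteq> 0"
      using \<open>0 < ?c\<close> by (simp only: of_real_eq_0_iff)
    then have "(1 / ?c) *\<^sub>R (2 *\<^sub>R char_rv M (\<lambda>\<omega>. t * Y \<omega>)
        + of_real (expectation h) * char_rv M (\<lambda>\<omega>. t * Y \<omega>)) = char_rv M (\<lambda>\<omega>. t * Y \<omega>)"
      by (simp add: scaleR_conv_of_real field_simps)
    finally show ?thesis .
  qed
  then have "measure (tilt M h) ?F = prob ?F"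
    using prob_vimage_eq_if_char_rv_eq[OF prob_space_tilt prob_space_axioms] h_bounded
    by (simp add: tilt_def)
  moreover have "measure (tilt M h) ?F = (1 / ?c) * (2 * prob ?F + (LINT \<omega>|M. h \<omega> * indicator A (Y \<omega>)))"
  proof -
    have [measurable]: "?F \<in> events"
      by measurable
    have "measure (tilt M h) ?F = integral\<^sup>L (tilt M h) (indicator ?F)"
      using prob_space_tilt[OF assms(2) h_bounded]
      by (simp add: prob_space.prob_space finite_measure.emeasure_eq_measure prob_space_def tilt_def)
    also have "\<dots> = (1 / ?c) * (2 * prob ?F + (LINT \<omega>|M. h \<omega> * indicator ?F \<omega>))"
      using h_bounded by (subst integral_tilt) (auto intro!: bounded simp: indicator_def)
    also have "(LINT \<omega>|M. h \<omega> * indicator ?F \<omega>) = (LINT \<omega>|M. h \<omega> * indicator A (Y \<omega>))"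
      by (intro Bochner_Integration.integral_cong) (auto simp: indicator_def)
    finally show ?thesis .
  qed
  ultimately show ?thesis
    using \<open>0 < ?c\<close> by (simp add: field_simps)
qed

lemma of_real_cos_iexp: "complex_of_real (cos x) = 1 / 2 * iexp x + 1 / 2 * iexp (- x)"
  by (simp add: cos_of_real[symmetric] cos_exp_eq add_divide_distrib)

lemma of_real_sin_iexp: "complex_of_real (sin x) = - \<i> / 2 * iexp x + \<i> / 2 * iexp (- x)"
  by (simp add: sin_of_real[symmetric] sin_exp_eq field_simps)

lemma (in prob_space) integral_iexp_combination_mult_iexp:
  assumes [measurable]: "S \<in> borel_measurable M" "Y \<in> borel_measurable M"
    and plus: "char_rv M (\<lambda>\<omega>. S \<omega> + u * Y \<omega>) = char_rv M S * char_rv M (\<lambda>\<omega>. u * Y \<omega>)"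
    and minus: "char_rv M (\<lambda>\<omega>. - S \<omega> + u * Y \<omega>) = char_rv M (\<lambda>\<omega>. - S \<omega>) * char_rv M (\<lambda>\<omega>. u * Y \<omega>)"
  shows "(CLINT \<omega>|M. (\<alpha> * iexp (S \<omega>) + \<beta> * iexp (- S \<omega>)) * iexp (u * Y \<omega>))
      = (CLINT \<omega>|M. \<alpha> * iexp (S \<omega>) + \<beta> * iexp (- S \<omega>)) * char_rv M (\<lambda>\<omega>. u * Y \<omega>)"
proof -
  have "(CLINT \<omega>|M. (\<alpha> * iexp (S \<omega>) + \<beta> * iexp (- S \<omega>)) * iexp (u * Y \<omega>))
      = (CLINT \<omega>|M. \<alpha> * iexp (S \<omega> + u * Y \<omega>) + \<beta> * iexp (- S \<omega> + u * Y \<omega>))"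
    by (intro Bochner_Integration.integral_cong) (simp_all add: algebra_simps flip: exp_add)
  also have "\<dots> = \<alpha> * char_rv M (\<lambda>\<omega>. S \<omega> + u * Y \<omega>) + \<beta> * char_rv M (\<lambda>\<omega>. - S \<omega> + u * Y \<omega>)"
    using integrable_iexp[of "\<lambda>\<omega>. S \<omega> + u * Y \<omega>"] integrable_iexp[of "\<lambda>\<omega>. - S \<omega> + u * Y \<omega>"]
    by (simp add: char_rv_def)
  also have "\<dots> = (\<alpha> * char_rv M S + \<beta> * char_rv M (\<lambda>\<omega>. - S \<omega>)) * char_rv M (\<lambda>\<omega>. u * Y \<omega>)"
    unfolding plus minus by (simp add: algebra_simps)
  also have "\<alpha> * char_rv M S + \<beta> * char_rv M (\<lambda>\<omega>. - S \<omega>)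
      = (CLINT \<omega>|M. \<alpha> * iexp (S \<omega>) + \<beta> * iexp (- S \<omega>))"
    using integrable_iexp[of S] integrable_iexp[of "\<lambda>\<omega>. - S \<omega>"] by (simp add: char_rv_def)
  finally show ?thesis .
qed

lemma (in prob_space) integral_iexp_mult_indicator_eq:
  assumes [measurable]: "S \<in> borel_measurable M" "Y \<in> borel_measurable M" "A \<in> sets borel"
    and plus: "\<And>u. char_rv M (\<lambda>\<omega>. S \<omega> + u * Y \<omega>) = char_rv M S * char_rv M (\<lambda>\<omega>. u * Y \<omega>)"
    and minus: "\<And>u. char_rv M (\<lambda>\<omega>. - S \<omega> + u * Y \<omega>)
                     = char_rv M (\<lambda>\<omega>. - S \<omega>) * char_rv M (\<lambda>\<omega>. u * Y \<omega>)"
  shows "(CLINT \<omega>|M. iexp (S \<omega>) * indicator A (Y \<omega>)) = char_rv M S * prob {\<omega>\<in>space M. Y \<omega> \<in> A}"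
proof -
  let ?P = "prob {\<omega>\<in>space M. Y \<omega> \<in> A}"
  \<comment> \<open>The real-valued functions \<open>cos \<circ> S\<close> and \<open>sin \<circ> S\<close> are combinations
    \<open>\<alpha> e^{iS} + \<beta> e^{-iS}\<close>, for which the factorization follows from the hypotheses.\<close>
  note combination = integral_iexp_combination_mult_iexp[OF assms(1,2) plus minus]
  have cos: "(LINT \<omega>|M. cos (S \<omega>) * indicator A (Y \<omega>)) = expectation (\<lambda>\<omega>. cos (S \<omega>)) * ?P"
  proof (rule integral_mult_indicator_eq_if_integral_mult_iexp)
    show "(CLINT \<omega>|M. of_real (cos (S \<omega>)) * iexp (u * Y \<omega>))
        = of_real (expectation (\<lambda>\<omega>. cos (S \<omega>))) * char_rv M (\<lambda>\<omega>. u * Y \<omega>)" for u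
      unfolding integral_complex_of_real[symmetric] of_real_cos_iexp by (rule combination)
  qed auto
  have sin: "(LINT \<omega>|M. sin (S \<omega>) * indicator A (Y \<omega>)) = expectation (\<lambda>\<omega>. sin (S \<omega>)) * ?P"
  proof (rule integral_mult_indicator_eq_if_integral_mult_iexp)
    show "(CLINT \<omega>|M. of_real (sin (S \<omega>)) * iexp (u * Y \<omega>))
        = of_real (expectation (\<lambda>\<omega>. sin (S \<omega>))) * char_rv M (\<lambda>\<omega>. u * Y \<omega>)" for u
      unfolding integral_complex_of_real[symmetric] of_real_sin_iexp by (rule combination)
  qed auto
  have iexp_cos_sin: "iexp x = of_real (cos x) + \<i> * of_real (sin x)" for x
    by (simp add: cis_conv_exp[symmetric] complex_eq_iff)
  have bounded: "integrable M (\<lambda>\<omega>. f (S \<omega>) * indicator A (Y \<omega>) :: real)"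
    if "\<And>x. \<bar>f x\<bar> \<le> 1" "f \<in> borel_measurable borel" for f
    using that by (intro integrable_const_bound[where B=1]) (auto simp: indicator_def)
  have "(CLINT \<omega>|M. iexp (S \<omega>) * indicator A (Y \<omega>))
      = (CLINT \<omega>|M. of_real (cos (S \<omega>) * indicator A (Y \<omega>))
                    + \<i> * of_real (sin (S \<omega>) * indicator A (Y \<omega>)))"
    by (intro Bochner_Integration.integral_cong) (simp_all add: iexp_cos_sin indicator_def)
  also have "\<dots> = (of_real (expectation (\<lambda>\<omega>. cos (S \<omega>)))
                  + \<i> * of_real (expectation (\<lambda>\<omega>. sin (S \<omega>)))) * of_real ?P"
    using bounded[of cos] bounded[of sin] by (simp add: cos sin algebra_simps del: of_real_mult)
      (simp add: algebra_simps)
  also have "of_real (expectation (\<lambda>\<omega>. cos (S \<omega>))) + \<i> * of_real (expectation (\<lambda>\<omega>. sin (S \<omega>)))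
      = char_rv M S"
  proof -
    have "integrable M (\<lambda>\<omega>. cos (S \<omega>))" "integrable M (\<lambda>\<omega>. sin (S \<omega>))"
      by (auto intro!: integrable_const_bound[where B=1])
    then show ?thesis
      unfolding char_rv_def iexp_cos_sin by simp
  qed
  finally show ?thesis .
qed

definition char_factorizes :: "'a measure \<Rightarrow> ('i \<Rightarrow> 'a \<Rightarrow> real) \<Rightarrow> 'i set \<Rightarrow> bool" where
  "char_factorizes M Z I \<longleftrightarrow>
     (\<forall>t. char_rv M (\<lambda>\<omega>. \<Sum>i\<in>I. t i * Z i \<omega>) = (\<Prod>i\<in>I. char_rv M (\<lambda>\<omega>. t i * Z i \<omega>)))"

lemma sum_if_eq_mult:
  fixes Z :: "'i \<Rightarrow> real"
  shows "finite I \<Longrightarrow> i \<in> I \<Longrightarrow> (\<Sum>j\<in>I. (if j = i then a else 0) * Z j) = a * Z i"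
  by (simp add: if_distrib[of "\<lambda>x. x * _"] cong: if_cong)

lemma (in prob_space) char_factorizes_subset:
  assumes "char_factorizes M Z I" "finite I" "J \<subseteq> I"
  shows "char_factorizes M Z J"
  unfolding char_factorizes_def
proof
  fix t :: "_ \<Rightarrow> real"
  define t' where "t' i = (if i \<in> J then t i else 0)" for i
  have "char_rv M (\<lambda>\<omega>. \<Sum>i\<in>J. t i * Z i \<omega>) = char_rv M (\<lambda>\<omega>. \<Sum>i\<in>I. t' i * Z i \<omega>)"
    using assms(2,3) by (simp add: t'_def if_distrib[of "\<lambda>x. x * _"] sum.If_cases Int_absorb1)
  also have "\<dots> = (\<Prod>i\<in>I. char_rv M (\<lambda>\<omega>. t' i * Z i \<omega>))"
    using assms(1) by (simp add: char_factorizes_def)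
  also have "\<dots> = (\<Prod>i\<in>J. char_rv M (\<lambda>\<omega>. t i * Z i \<omega>))"
    using assms(2,3) by (intro prod.mono_neutral_cong_right) (auto simp: t'_def char_rv_zero)
  finally show "char_rv M (\<lambda>\<omega>. \<Sum>i\<in>J. t i * Z i \<omega>) = (\<Prod>i\<in>J. char_rv M (\<lambda>\<omega>. t i * Z i \<omega>))" .
qed

lemma (in prob_space) char_factorizes_insert_split:
  assumes "char_factorizes M Z (insert y I)" "finite I" "y \<notin> I"
  shows "char_rv M (\<lambda>\<omega>. (\<Sum>i\<in>I. t i * Z i \<omega>) + u * Z y \<omega>)
       = char_rv M (\<lambda>\<omega>. \<Sum>i\<in>I. t i * Z i \<omega>) * char_rv M (\<lambda>\<omega>. u * Z y \<omega>)"
proof -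
  have "char_rv M (\<lambda>\<omega>. (\<Sum>i\<in>I. t i * Z i \<omega>) + u * Z y \<omega>)
      = char_rv M (\<lambda>\<omega>. \<Sum>i\<in>insert y I. (t(y := u)) i * Z i \<omega>)"
    using assms(2,3) by (intro arg_cong[where f="char_rv M"] ext) (auto simp: add.commute intro!: sum.cong)
  also have "\<dots> = (\<Prod>i\<in>insert y I. char_rv M (\<lambda>\<omega>. (t(y := u)) i * Z i \<omega>))"
    using assms(1) unfolding char_factorizes_def by blast
  also have "\<dots> = char_rv M (\<lambda>\<omega>. u * Z y \<omega>) * (\<Prod>i\<in>I. char_rv M (\<lambda>\<omega>. t i * Z i \<omega>))"
    using assms(2,3) by (auto intro!: prod.cong)
  also have "(\<Prod>i\<in>I. char_rv M (\<lambda>\<omega>. t i * Z i \<omega>)) = char_rv M (\<lambda>\<omega>. \<Sum>i\<in>I. t i * Z i \<omega>)"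
  proof -
    have "char_factorizes M Z I"
      by (rule char_factorizes_subset[OF assms(1)]) (use assms(2) in auto)
    then show ?thesis
      unfolding char_factorizes_def by simp
  qed
  finally show ?thesis by (simp add: mult.commute)
qed

lemma char_factorizes_cong:
  assumes "finite I"
    and "\<And>t. char_rv N (\<lambda>\<omega>. \<Sum>i\<in>I. t i * Z i \<omega>) = char_rv M (\<lambda>\<omega>. \<Sum>i\<in>I. t i * Z i \<omega>)"
  shows "char_factorizes N Z I \<longleftrightarrow> char_factorizes M Z I"
proof -
  have "char_rv N (\<lambda>\<omega>. a * Z i \<omega>) = char_rv M (\<lambda>\<omega>. a * Z i \<omega>)" if "i \<in> I" for a i
    using assms(2)[of "\<lambda>j. if j = i then a else 0"] sum_if_eq_mult[OF assms(1) that] by simp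
  then show ?thesis
    using assms by (simp add: char_factorizes_def cong: prod.cong)
qed

lemma (in prob_space) integral_uniform_measure:
  fixes f :: "'a \<Rightarrow> 'b::{banach, second_countable_topology}"
  assumes [measurable]: "E \<in> events" "f \<in> borel_measurable M" and "prob E \<noteq> 0"
  shows "integral\<^sup>L (uniform_measure M E) f = (1 / prob E) *\<^sub>R (LINT \<omega>|M. indicator E \<omega> *\<^sub>R f \<omega>)"
proof -
  have "1 / ennreal (prob E) = ennreal (1 / prob E)"
    using assms(3) by (simp add: divide_ennreal[symmetric] less_le)
  then have "uniform_measure M E = density M (\<lambda>\<omega>. ennreal (indicator E \<omega> / prob E))"
    unfolding uniform_measure_def
    by (intro density_cong) (auto simp: emeasure_eq_measure indicator_def)
  then have "integral\<^sup>L (uniform_measure M E) f = (LINT \<omega>|M. (indicator E \<omega> / prob E) *\<^sub>R f \<omega>)"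
    by (simp add: integral_density)
  also have "\<dots> = (LINT \<omega>|M. (1 / prob E) *\<^sub>R (indicator E \<omega> *\<^sub>R f \<omega>))"
    by (intro Bochner_Integration.integral_cong) auto
  also have "\<dots> = (1 / prob E) *\<^sub>R (LINT \<omega>|M. indicator E \<omega> *\<^sub>R f \<omega>)"
    by (rule integral_scaleR_right)
  finally show ?thesis .
qed

lemma (in prob_space) char_rv_uniform_measure_eq:
  assumes fact: "char_factorizes M Z (insert y I)" "finite I" "y \<notin> I"
    and [measurable]: "\<And>i. i \<in> insert y I \<Longrightarrow> Z i \<in> borel_measurable M" "B \<in> sets borel"
    and pos: "prob {\<omega>\<in>space M. Z y \<omega> \<in> B} \<noteq> 0"
  shows "char_rv (uniform_measure M {\<omega>\<in>space M. Z y \<omega> \<in> B}) (\<lambda>\<omega>. \<Sum>i\<in>I. t i * Z i \<omega>)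
       = char_rv M (\<lambda>\<omega>. \<Sum>i\<in>I. t i * Z i \<omega>)"
proof -
  let ?F = "{\<omega>\<in>space M. Z y \<omega> \<in> B}" and ?S = "\<lambda>t \<omega>. \<Sum>i\<in>I. t i * Z i \<omega>"
  have [measurable]: "?S t \<in> borel_measurable M" for t
    using fact(2) by measurable
  note split = char_factorizes_insert_split[OF fact]
  have "char_rv (uniform_measure M ?F) (?S t)
      = (1 / prob ?F) *\<^sub>R (CLINT \<omega>|M. indicator ?F \<omega> *\<^sub>R iexp (?S t \<omega>))"
    using pos unfolding char_rv_def by (subst integral_uniform_measure) auto
  also have "(CLINT \<omega>|M. indicator ?F \<omega> *\<^sub>R iexp (?S t \<omega>))
      = (CLINT \<omega>|M. iexp (?S t \<omega>) * indicator B (Z y \<omega>))"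
    by (intro Bochner_Integration.integral_cong) (auto simp: indicator_def)
  also have "\<dots> = char_rv M (?S t) * prob ?F"
    using split[of t] split[of "\<lambda>i. - t i"]
    by (intro integral_iexp_mult_indicator_eq) (simp_all add: sum_negf)
  finally show ?thesis
    using pos by (simp add: scaleR_conv_of_real)
qed

lemma (in prob_space) char_factorizes_uniform_measure:
  assumes "char_factorizes M Z (insert y I)" "finite I" "y \<notin> I"
    and "\<And>i. i \<in> insert y I \<Longrightarrow> Z i \<in> borel_measurable M" "B \<in> sets borel"
    and "prob {\<omega>\<in>space M. Z y \<omega> \<in> B} \<noteq> 0"
  shows "char_factorizes (uniform_measure M {\<omega>\<in>space M. Z y \<omega> \<in> B}) Z I"
  using char_factorizes_cong[OF assms(2) char_rv_uniform_measure_eq[OF assms]]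
    char_factorizes_subset[OF assms(1) _ subset_insertI] assms(2) by simp

lemma (in prob_space) prob_uniform_measure_vimage_eq:
  assumes "char_factorizes M Z (insert y I)" "finite I" "y \<notin> I"
    and [measurable]: "\<And>i. i \<in> insert y I \<Longrightarrow> Z i \<in> borel_measurable M" "B \<in> sets borel"
    and "prob {\<omega>\<in>space M. Z y \<omega> \<in> B} \<noteq> 0" and "i \<in> I" "C \<in> sets borel"
  shows "measure (uniform_measure M {\<omega>\<in>space M. Z y \<omega> \<in> B}) {\<omega>\<in>space M. Z i \<omega> \<in> C}
       = prob {\<omega>\<in>space M. Z i \<omega> \<in> C}"
proof -
  let ?M' = "uniform_measure M {\<omega>\<in>space M. Z y \<omega> \<in> B}"
  have "prob_space ?M'"
    using assms(6) by (intro prob_space_uniform_measure) (auto simp: emeasure_eq_measure)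
  then have "measure ?M' {\<omega>\<in>space ?M'. Z i \<omega> \<in> C} = prob {\<omega>\<in>space M. Z i \<omega> \<in> C}"
  proof (rule prob_vimage_eq_if_char_rv_eq[OF _ prob_space_axioms])
    show "char_rv ?M' (\<lambda>\<omega>. a * Z i \<omega>) = char_rv M (\<lambda>\<omega>. a * Z i \<omega>)" for a
      using char_rv_uniform_measure_eq[OF assms(1-6), of "\<lambda>j. if j = i then a else 0"]
        sum_if_eq_mult[OF assms(2,7)] by simp
  qed (use assms(7,8) in auto)
  then show ?thesis
    by simp
qed

lemma prob_Inter_eq_prod_if_char_factorizes:
  assumes "finite I" "prob_space M" "\<And>i. i \<in> I \<Longrightarrow> Z i \<in> borel_measurable M" "char_factorizes M Z I"
    "\<And>i. i \<in> I \<Longrightarrow> B i \<in> sets borel"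
  shows "measure M {\<omega>\<in>space M. \<forall>i\<in>I. Z i \<omega> \<in> B i} = (\<Prod>i\<in>I. measure M {\<omega>\<in>space M. Z i \<omega> \<in> B i})"
  using assms
proof (induction I arbitrary: M rule: finite_induct)
  case empty
  then show ?case
    by (simp add: prob_space.prob_space)
next
  case (insert y I M)
  interpret prob_space M by fact
  have [measurable]: "Z i \<in> borel_measurable M" "B i \<in> sets borel" if "i \<in> insert y I" for i
    using insert.prems that by auto
  define F where "F = {\<omega>\<in>space M. Z y \<omega> \<in> B y}"
  define E where "E = {\<omega>\<in>space M. \<forall>i\<in>I. Z i \<omega> \<in> B i}"
  have [measurable]: "F \<in> events" "E \<in> events"
    unfolding F_def E_def using insert.hyps(1) by measurable
  have split: "{\<omega>\<in>space M. \<forall>i\<in>insert y I. Z i \<omega> \<in> B i} = F \<inter> E"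
    by (auto simp: F_def E_def)
  show ?case
  proof (cases "prob F = 0")
    case True
    then have "prob (F \<inter> E) = 0"
      using finite_measure_mono[of "F \<inter> E" F] by (simp add: measure_le_0_iff)
    then show ?thesis
      unfolding split prod.insert[OF insert.hyps] using True by (simp add: F_def[symmetric])
  next
    case False
    \<comment> \<open>Condition on \<open>F\<close>: the joint law of the remaining variables does not change.\<close>
    let ?M' = "uniform_measure M F"
    have M': "prob_space ?M'"
      using False by (intro prob_space_uniform_measure) (auto simp: emeasure_eq_measure)
    have "char_factorizes ?M' Z I"
      using insert False unfolding F_def by (intro char_factorizes_uniform_measure) auto
    then have "measure ?M' E = (\<Prod>i\<in>I. measure ?M' {\<omega>\<in>space ?M'. Z i \<omega> \<in> B i})"
      using insert.IH[OF M'] insert.prems(4) by (simp add: E_def)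
    also have "\<dots> = (\<Prod>i\<in>I. prob {\<omega>\<in>space M. Z i \<omega> \<in> B i})"
      using insert False unfolding F_def by (auto intro!: prod.cong prob_uniform_measure_vimage_eq)
    moreover have "measure ?M' E = prob (F \<inter> E) / prob F"
      using False by (simp add: emeasure_eq_measure)
    ultimately have "prob (F \<inter> E) = prob F * (\<Prod>i\<in>I. prob {\<omega>\<in>space M. Z i \<omega> \<in> B i})"
      using False by (simp add: divide_eq_eq)
    then show ?thesis
      unfolding split prod.insert[OF insert.hyps] F_def .
  qed
qed

lemma (in prob_space) indep_vars_if_char_factorizes:
  assumes "finite I" "\<And>i. i \<in> I \<Longrightarrow> Z i \<in> borel_measurable M" "char_factorizes M Z I"
  shows "indep_vars (\<lambda>_. borel) Z I"
  unfolding indep_vars_def2 indep_sets_def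
proof (intro conjI ballI allI impI)
  fix i assume "i \<in> I"
  then show "random_variable borel (Z i)" "{Z i -` A \<inter> space M |A. A \<in> sets borel} \<subseteq> events"
    using assms(2) by (auto intro: measurable_sets)
next
  fix J A assume J: "J \<subseteq> I" "J \<noteq> {}" "finite J"
    and A: "A \<in> (\<Pi> j\<in>J. {Z j -` A \<inter> space M |A. A \<in> sets borel})"
  then have "\<forall>j\<in>J. \<exists>B. A j = Z j -` B \<inter> space M \<and> B \<in> sets borel"
    by auto
  then obtain B where B: "\<And>j. j \<in> J \<Longrightarrow> A j = Z j -` B j \<inter> space M \<and> B j \<in> sets borel"
    by metis
  define B' where "B' i = (if i \<in> J then B i else UNIV)" for i
  have "prob (\<Inter>j\<in>J. A j) = prob {\<omega>\<in>space M. \<forall>i\<in>I. Z i \<omega> \<in> B' i}"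
    using B J by (intro arg_cong[where f=prob]) (auto simp: B'_def)
  also have "\<dots> = (\<Prod>i\<in>I. prob {\<omega>\<in>space M. Z i \<omega> \<in> B' i})"
    using B by (intro prob_Inter_eq_prod_if_char_factorizes[OF assms(1) prob_space_axioms assms(2,3)])
      (auto simp: B'_def)
  also have "\<dots> = (\<Prod>i\<in>J. prob {\<omega>\<in>space M. Z i \<omega> \<in> B' i})"
    using J assms(1) by (intro prod.mono_neutral_right) (auto simp: B'_def prob_space)
  also have "\<dots> = (\<Prod>j\<in>J. prob (A j))"
    using B by (intro prod.cong) (auto simp: B'_def vimage_def Int_def conj_commute)
  finally show "prob (\<Inter>j\<in>J. A j) = (\<Prod>j\<in>J. prob (A j))" .
qed

section \<open>Uncorrelated Gaussian families\<close>

lemma (in prob_space) char_rv_centered_gaussian: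
  assumes "centered_gaussian_rv M W v"
  shows "char_rv M W = exp (- v / 2)"
proof -
  have [measurable]: "W \<in> borel_measurable M" and "0 \<le> v"
    using assms by (auto simp: centered_gaussian_rv_def)
  show ?thesis
  proof (cases "v = 0")
    case True
    then have "AE \<omega> in M. W \<omega> = 0"
      using assms by (simp add: centered_gaussian_rv_def)
    then have "char_rv M W = (CLINT \<omega>|M. iexp 0)"
      unfolding char_rv_def by (intro integral_cong_AE) auto
    then show ?thesis
      using True by (simp add: prob_space)
  next
    case False
    define s where "s = sqrt v"
    have s: "0 < s"
      using False \<open>0 \<le> v\<close> by (simp add: s_def)
    have "distributed M lborel W (normal_density 0 s)"
      using assms False by (simp add: centered_gaussian_rv_def s_def)
    then have "distributed M lborel (\<lambda>\<omega>. (W \<omega> - 0) / s) std_normal_density"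
      using normal_standard_normal_convert[OF s] by simp
    then have std: "distr M lborel (\<lambda>\<omega>. W \<omega> / s) = std_normal_distribution"
      by (simp add: distributed_def)
    have "char_rv M W = (CLINT \<omega>|M. iexp (s * (W \<omega> / s)))"
      unfolding char_rv_def using s by simp
    also have "\<dots> = char (distr M lborel (\<lambda>\<omega>. W \<omega> / s)) s"
      unfolding char_def by (subst integral_distr) auto
    also have "\<dots> = exp (- s\<^sup>2 / 2)"
      by (simp add: std char_std_normal_distribution)
    also have "\<dots> = exp (- v / 2)"
      using \<open>0 \<le> v\<close> by (simp add: s_def)
    finally show ?thesis .
  qed
qed

lemma (in prob_space) char_factorizes_if_gaussian_diagonal:
  assumes "finite I"
    and "\<And>t. centered_gaussian_rv M (\<lambda>\<omega>. \<Sum>i\<in>I. t i * Z i \<omega>) (\<Sum>i\<in>I. (t i)\<^sup>2 * w i)"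
  shows "char_factorizes M Z I"
  unfolding char_factorizes_def
proof
  fix t :: "_ \<Rightarrow> real"
  have single: "char_rv M (\<lambda>\<omega>. t i * Z i \<omega>) = exp (- ((t i)\<^sup>2 * w i) / 2)" if "i \<in> I" for i
    using char_rv_centered_gaussian[OF assms(2)[of "\<lambda>j. if j = i then t i else 0"]]
      sum_if_eq_mult[OF assms(1) that] assms(1) that
    by (simp add: if_distrib[of "\<lambda>x. x\<^sup>2 * _"] cong: if_cong)
  have "char_rv M (\<lambda>\<omega>. \<Sum>i\<in>I. t i * Z i \<omega>) = exp (- (\<Sum>i\<in>I. (t i)\<^sup>2 * w i) / 2)"
    using char_rv_centered_gaussian[OF assms(2)] .
  also have "\<dots> = (\<Prod>i\<in>I. exp (- ((t i)\<^sup>2 * w i) / 2))"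
    using assms(1) by (simp add: exp_sum[symmetric] sum_divide_distrib sum_negf)
  also have "\<dots> = (\<Prod>i\<in>I. char_rv M (\<lambda>\<omega>. t i * Z i \<omega>))"
    using single by simp
  finally show "char_rv M (\<lambda>\<omega>. \<Sum>i\<in>I. t i * Z i \<omega>) = (\<Prod>i\<in>I. char_rv M (\<lambda>\<omega>. t i * Z i \<omega>))" .
qed

lemma centered_gaussian_process_sum:
  assumes "centered_gaussian_process M B K" "finite J"
  shows "centered_gaussian_rv M (\<lambda>\<omega>. \<Sum>j\<in>J. a j * B (p j) \<omega>)
           (\<Sum>j\<in>J. \<Sum>j'\<in>J. a j * a j' * K (p j) (p j'))"
proof -
  obtain h where h: "bij_betw h {..<card J} J"
    using ex_bij_betw_nat_finite[OF assms(2)] by (auto simp: atLeast0LessThan)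
  have "\<forall>(m::nat) P c. centered_gaussian_rv M (\<lambda>\<omega>. \<Sum>i<m. c i * B (P i) \<omega>)
                  (\<Sum>i<m. \<Sum>i'<m. c i * c i' * K (P i) (P i'))"
    using assms(1) unfolding centered_gaussian_process_def by blast
  note specialized = this[rule_format, where m="card J" and P="\<lambda>i. p (h i)" and c="\<lambda>i. a (h i)"]
  have reindex: "(\<Sum>i<card J. f (h i)) = (\<Sum>j\<in>J. f j)" for f :: "_ \<Rightarrow> real"
    by (rule sum.reindex_bij_betw[OF h])
  have "(\<lambda>\<omega>. \<Sum>i<card J. a (h i) * B (p (h i)) \<omega>) = (\<lambda>\<omega>. \<Sum>j\<in>J. a j * B (p j) \<omega>)"
    by (intro ext reindex)
  moreover have "(\<Sum>i<card J. \<Sum>i'<card J. a (h i) * a (h i') * K (p (h i)) (p (h i')))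
      = (\<Sum>i<card J. \<Sum>j'\<in>J. a (h i) * a j' * K (p (h i)) (p j'))"
    by (intro sum.cong refl reindex)
  moreover have "\<dots> = (\<Sum>j\<in>J. \<Sum>j'\<in>J. a j * a j' * K (p j) (p j'))"
    by (rule reindex)
  ultimately show ?thesis
    using specialized by simp
qed

lemma centered_gaussian_rv_sum_of_combinations:
  assumes G: "centered_gaussian_process M B K" and "finite I" "finite F"
  shows "centered_gaussian_rv M (\<lambda>\<omega>. \<Sum>j\<in>I. t j * (\<Sum>k\<in>F. c j k * B (p j k) \<omega>))
    (\<Sum>j\<in>I. \<Sum>j'\<in>I. t j * t j' * (\<Sum>k\<in>F. \<Sum>k'\<in>F. c j k * c j' k' * K (p j k) (p j' k')))"
proof -
  have "centered_gaussian_rv M (\<lambda>\<omega>. \<Sum>(j, k)\<in>I \<times> F. (t j * c j k) * B (p j k) \<omega>)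
      (\<Sum>(j, k)\<in>I \<times> F. \<Sum>(j', k')\<in>I \<times> F. (t j * c j k) * (t j' * c j' k') * K (p j k) (p j' k'))"
    using centered_gaussian_process_sum[OF G, of "I \<times> F" "case_prod (\<lambda>j k. t j * c j k)"
        "case_prod p"] assms(2,3) by (simp add: case_prod_beta')
  moreover have "(\<Sum>(j, k)\<in>I \<times> F. (t j * c j k) * B (p j k) \<omega>)
      = (\<Sum>j\<in>I. t j * (\<Sum>k\<in>F. c j k * B (p j k) \<omega>))" for \<omega>
    by (simp add: sum.cartesian_product[symmetric] sum_distrib_left mult.assoc)
  moreover have "(\<Sum>(j, k)\<in>I \<times> F. \<Sum>(j', k')\<in>I \<times> F. (t j * c j k) * (t j' * c j' k') * K (p j k) (p j' k'))
      = (\<Sum>j\<in>I. \<Sum>j'\<in>I. t j * t j' * (\<Sum>k\<in>F. \<Sum>k'\<in>F. c j k * c j' k' * K (p j k) (p j' k')))"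
    by (simp add: sum.cartesian_product[symmetric] sum_distrib_left algebra_simps
        sum.swap[of _ F I])
  ultimately show ?thesis
    by simp
qed

lemma indep_vars_uncorrelated_gaussian:
  assumes G: "centered_gaussian_process M B K" and "finite I" "finite F"
    and uncorrelated: "\<And>j j'. j \<in> I \<Longrightarrow> j' \<in> I \<Longrightarrow> j \<noteq> j' \<Longrightarrow>
      (\<Sum>k\<in>F. \<Sum>k'\<in>F. c j k * c j' k' * K (p j k) (p j' k')) = 0"
  shows "prob_space.indep_vars M (\<lambda>_. borel) (\<lambda>j \<omega>. \<Sum>k\<in>F. c j k * B (p j k) \<omega>) I"
proof -
  interpret prob_space M
    using G by (simp add: centered_gaussian_process_def)
  have [measurable]: "B x \<in> borel_measurable M" for x
    using G by (simp add: centered_gaussian_process_def)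
  define cov where "cov j j' = (\<Sum>k\<in>F. \<Sum>k'\<in>F. c j k * c j' k' * K (p j k) (p j' k'))" for j j'
  have "(\<Sum>j\<in>I. \<Sum>j'\<in>I. t j * t j' * cov j j') = (\<Sum>j\<in>I. (t j)\<^sup>2 * cov j j)" for t
  proof (intro sum.cong refl)
    fix j assume "j \<in> I"
    then have "(\<Sum>j'\<in>I. t j * t j' * cov j j') = (\<Sum>j'\<in>{j}. t j * t j' * cov j j')"
      using assms(2) uncorrelated by (intro sum.mono_neutral_right) (auto simp: cov_def)
    then show "(\<Sum>j'\<in>I. t j * t j' * cov j j') = (t j)\<^sup>2 * cov j j"
      by (simp add: power2_eq_square)
  qed
  then have "centered_gaussian_rv M (\<lambda>\<omega>. \<Sum>j\<in>I. t j * (\<Sum>k\<in>F. c j k * B (p j k) \<omega>))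
      (\<Sum>j\<in>I. (t j)\<^sup>2 * cov j j)" for t
    using centered_gaussian_rv_sum_of_combinations[OF assms(1-3), of t c p] by (simp add: cov_def)
  then show ?thesis
    using assms(2,3)
    by (intro indep_vars_if_char_factorizes char_factorizes_if_gaussian_diagonal) auto
qed

section \<open>The radial covariance\<close>

lemma eq_scaleR_if_sgn_eq:
  fixes X Y :: "'a::real_normed_vector"
  assumes "sgn X = sgn Y" "Y \<noteq> 0"
  shows "X = (norm X / norm Y) *\<^sub>R Y"
proof -
  have "X = norm X *\<^sub>R sgn X"
    by (cases "X = 0") (simp_all add: sgn_div_norm)
  then have "X = norm X *\<^sub>R sgn Y"
    using assms(1) by simp
  then show ?thesis
    using assms(2) by (simp add: sgn_div_norm divide_inverse)
qed

lemma radial_dist_eq: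
  "radial_dist X Y = (if sgn X = sgn Y then \<bar>norm X - norm Y\<bar> else norm X + norm Y)"
proof (cases "sgn X = sgn Y")
  case True
  show ?thesis
  proof (cases "Y = 0")
    case True
    then show ?thesis
      using \<open>sgn X = sgn Y\<close> by (simp add: radial_dist_def sgn_zero_iff)
  next
    case False
    define r where "r = norm X / norm Y"
    have X: "X = r *\<^sub>R Y"
      using eq_scaleR_if_sgn_eq[OF True False] by (simp add: r_def)
    then have "X - Y = (r - 1) *\<^sub>R Y"
      by (simp add: scaleR_diff_left)
    then have "norm (X - Y) = \<bar>r - 1\<bar> * norm Y"
      by simp
    also have "\<dots> = \<bar>(r - 1) * norm Y\<bar>"
      by (simp add: abs_mult)
    also have "\<dots> = \<bar>norm X - norm Y\<bar>"
      using False by (simp add: r_def algebra_simps)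
    finally show ?thesis
      using X True unfolding radial_dist_def by auto
  qed
next
  case False
  have "norm (X - Y) = norm X + norm Y" if X: "X = a *\<^sub>R Y" for a
  proof -
    have "\<not> 0 < a"
      using False X by (auto simp: sgn_scaleR)
    have "X - Y = (a - 1) *\<^sub>R Y"
      using X by (simp add: scaleR_diff_left)
    then have "norm (X - Y) = (1 - a) * norm Y"
      using \<open>\<not> 0 < a\<close> by simp
    moreover have "norm X = - a * norm Y"
      using X \<open>\<not> 0 < a\<close> by simp
    ultimately show ?thesis
      by (simp add: algebra_simps)
  qed
  then show ?thesis
    using False unfolding radial_dist_def by auto
qed

definition radial_cov :: "real^2 \<Rightarrow> real^2 \<Rightarrow> real" where
  "radial_cov X Y = (radial_dist 0 X + radial_dist 0 Y - radial_dist X Y) / 2"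

lemma radial_cov_eq: "radial_cov X Y = (if sgn X = sgn Y then min (norm X) (norm Y) else 0)"
  by (simp add: radial_cov_def radial_dist_eq min_def)

lemma radial_cov_commute: "radial_cov X Y = radial_cov Y X"
  by (simp add: radial_cov_eq min.commute eq_commute)

section \<open>Sorting points along rays\<close>

lemma exists_sorting_permutation:
  fixes f :: "nat \<Rightarrow> 'b::linorder"
  shows "\<exists>\<sigma>. \<sigma> permutes {1..n} \<and> (\<forall>i j. 1 \<le> i \<longrightarrow> i \<le> j \<longrightarrow> j \<le> n \<longrightarrow> f (\<sigma> i) \<le> f (\<sigma> j))"
proof -
  define xs where "xs = sort_key f [1..<n+1]"
  define \<sigma> where "\<sigma> j = (if j \<in> {1..n} then xs ! (j - 1) else j)" for j
  have len: "length xs = n" and set: "set xs = {1..n}" and "distinct xs"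
    and sorted: "sorted (map f xs)"
    by (auto simp: xs_def)
  have "inj_on \<sigma> {1..n}"
    using len nth_eq_iff_index_eq[OF \<open>distinct xs\<close>] by (auto simp: inj_on_def \<sigma>_def)
  moreover have "\<sigma> ` {1..n} \<subseteq> {1..n}"
    using len set nth_mem by (fastforce simp: \<sigma>_def)
  ultimately have "bij_betw \<sigma> {1..n} {1..n}"
    by (simp add: bij_betw_def endo_inj_surj)
  then have "\<sigma> permutes {1..n}"
    by (rule bij_imp_permutes) (auto simp: \<sigma>_def)
  moreover have "f (\<sigma> i) \<le> f (\<sigma> j)" if "1 \<le> i" "i \<le> j" "j \<le> n" for i j
    using sorted_nth_mono[OF sorted, of "i - 1" "j - 1"] that len by (simp add: \<sigma>_def)
  ultimately show ?thesis
    by blast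
qed

text \<open>Lexicographic order on \<open>ray_key\<close> compares directions first, so after sorting the points on a
  common ray are contiguous and increasing in norm.\<close>

definition ray_key :: "real^2 \<Rightarrow> real list" where
  "ray_key X = [sgn X $ 1, sgn X $ 2, norm X]"

lemma ray_key_le_imp_norm_le: "ray_key X \<le> ray_key Y \<Longrightarrow> sgn X = sgn Y \<Longrightarrow> norm X \<le> norm Y"
  by (auto simp: ray_key_def less_eq_list_code less_list_code)

lemma ray_key_between_sgn_eq:
  assumes "ray_key X \<le> ray_key Y" "ray_key Y \<le> ray_key Z" "sgn X = sgn Z"
  shows "sgn Y = sgn Z"
proof -
  have "sgn Y $ 1 = sgn Z $ 1 \<and> sgn Y $ 2 = sgn Z $ 2"
    using assms by (auto simp: ray_key_def less_eq_list_code less_list_code)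
  then show ?thesis
    by (simp add: vec_eq_iff forall_2)
qed

definition ray_start :: "(nat \<Rightarrow> real^2) \<Rightarrow> nat \<Rightarrow> bool" where
  "ray_start x j \<longleftrightarrow> j = 1 \<or> sgn (x (j - 1)) \<noteq> sgn (x j)"

lemma ray_start_1: "ray_start x 1"
  by (simp add: ray_start_def)

lemma radial_cov_sorted_step:
  assumes sorted: "\<And>i j. 1 \<le> i \<Longrightarrow> i \<le> j \<Longrightarrow> j \<le> n \<Longrightarrow> ray_key (x i) \<le> ray_key (x j)"
    and "1 \<le> i" "i < j" "j \<le> n"
  shows "radial_cov (x i) (x j) = (if ray_start x j then 0 else radial_cov (x i) (x (j - 1)))"
proof (cases "ray_start x j")
  case True
  have "sgn (x i) \<noteq> sgn (x j)"
  proof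
    assume "sgn (x i) = sgn (x j)"
    then have "sgn (x (j - 1)) = sgn (x j)"
      using assms by (intro ray_key_between_sgn_eq[of "x i" "x (j - 1)" "x j"] sorted) auto
    then show False
      using True assms by (simp add: ray_start_def)
  qed
  then show ?thesis
    using True by (simp add: radial_cov_eq)
next
  case False
  then have j: "1 < j" "sgn (x (j - 1)) = sgn (x j)"
    using assms by (auto simp: ray_start_def)
  have "norm (x i) \<le> norm (x (j - 1))" "norm (x (j - 1)) \<le> norm (x j)" if "sgn (x i) = sgn (x j)"
    using assms j that by (auto intro!: ray_key_le_imp_norm_le[OF sorted])
  then show ?thesis
    using False j by (auto simp: radial_cov_eq min_def)
qed

section \<open>Blocks of increments\<close>

lemma sum_diff_telescope_if_start:
  fixes f :: "nat \<Rightarrow> 'b::ab_group_add"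
  assumes "P s" "\<And>i. s < i \<Longrightarrow> i \<le> j \<Longrightarrow> \<not> P i" "s \<le> j"
  shows "(\<Sum>i=s..j. f i - (if P i then 0 else f (i - 1))) = f j"
  using assms(3,2)
proof (induction j rule: dec_induct)
  case base
  then show ?case
    using assms(1) by simp
next
  case (step m)
  then show ?case
    by (simp add: sum.cl_ivl_Suc)
qed

lemma (in prob_space) indep_vars_reindex:
  assumes "indep_vars M' X (f ` I)" "inj_on f I"
  shows "indep_vars (\<lambda>i. M' (f i)) (\<lambda>i. X (f i)) I"
proof -
  have "indep_vars (\<lambda>i. PiM {f i} M') (\<lambda>i \<omega>. restrict (\<lambda>j. X j \<omega>) {f i}) I"
    using assms by (intro indep_vars_restrict) (auto simp: disjoint_family_on_def inj_on_def)
  then have "indep_vars (\<lambda>i. M' (f i)) (\<lambda>i \<omega>. restrict (\<lambda>j. X j \<omega>) {f i} (f i)) I"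
    by (rule indep_vars_compose2) (rule measurable_component_singleton, simp)
  then show ?thesis
    by simp
qed

lemma boundaries_before_elements:
  fixes S :: "nat set"
  assumes "S \<subseteq> {1..n}" "1 \<in> S"
  obtains q :: nat and b :: "nat \<Rightarrow> nat"
  where "q \<ge> 1" "b 0 = 0" "b q = n" "\<And>k. k < q \<Longrightarrow> b k < b (Suc k)"
    "\<And>l j. l \<in> {1..q} \<Longrightarrow> b (l - 1) < j \<Longrightarrow> j \<le> b l \<Longrightarrow> j \<in> S \<longleftrightarrow> j = b (l - 1) + 1"
proof -
  define xs where "xs = sorted_list_of_set S"
  define q where "q = length xs"
  define b where "b k = (if k < q then xs ! k - 1 else n)" for k
  have xs: "set xs = S" "sorted_wrt (<) xs"
    using assms(1) finite_subset[OF assms(1)] by (simp_all add: xs_def)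
  have elem: "1 \<le> xs ! k \<and> xs ! k \<le> n" if "k < q" for k
    using assms(1) xs nth_mem[of k xs] that by (auto simp: q_def)
  have less: "xs ! k < xs ! k'" if "k < k'" "k' < q" for k k'
    using sorted_wrt_nth_less[OF xs(2)] that by (simp add: q_def)
  obtain k1 where "k1 < q" "xs ! k1 = 1"
    using assms(2) xs by (auto simp: q_def in_set_conv_nth)
  then have "q \<ge> 1" "xs ! 0 = 1"
    using less[of 0 k1] elem[of 0] by (cases "k1 = 0"; simp)+
  moreover have "j \<in> S \<longleftrightarrow> j = b (l - 1) + 1" if "l \<in> {1..q}" "b (l - 1) < j" "j \<le> b l" for l j
  proof
    assume "j \<in> S"
    then obtain k where k: "k < q" "j = xs ! k"
      using xs by (auto simp: q_def in_set_conv_nth)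
    have "xs ! l \<le> xs ! k" if "l \<le> k"
      using k less[of l k] that by (cases "l = k") auto
    then have "\<not> k < l - 1" "\<not> l \<le> k"
      using \<open>l \<in> {1..q}\<close> that k less[of k "l - 1"] elem[of l] by (auto simp: b_def split: if_splits)
    then have "k = l - 1"
      by simp
    then show "j = b (l - 1) + 1"
      using that k elem[of k] by (auto simp: b_def)
  next
    assume "j = b (l - 1) + 1"
    then show "j \<in> S"
      using that elem[of "l - 1"] xs(1) by (auto simp: b_def q_def)
  qed
  moreover have "b k < b (Suc k)" if "k < q" for k
    using that elem[of k] less[of k "Suc k"] by (auto simp: b_def)
  ultimately show ?thesis
    using that[of q b] by (simp add: b_def)
qed

lemma interval_partition_at_starts:
  assumes "n \<ge> 1" "P 1"
  obtains q :: nat and ns :: "nat \<Rightarrow> nat"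
  where "q \<ge> 1" "\<forall>l\<in>{1..q}. ns l > 0" "(\<Sum>l=1..q. ns l) = n"
    "\<And>l. l \<in> {1..q} \<Longrightarrow> P ((\<Sum>i=1..l-1. ns i) + 1)"
    "\<And>l j. l \<in> {1..q} \<Longrightarrow> (\<Sum>i=1..l-1. ns i) + 1 < j \<Longrightarrow> j \<le> (\<Sum>i=1..l. ns i) \<Longrightarrow> \<not> P j"
proof -
  obtain q b where q: "q \<ge> 1" "b 0 = 0" "b q = n" and b_less: "\<And>k. k < q \<Longrightarrow> b k < b (Suc k)"
    and blocks: "\<And>l j. l \<in> {1..q} \<Longrightarrow> b (l - 1) < j \<Longrightarrow> j \<le> b l \<Longrightarrow>
                   j \<in> {j\<in>{1..n}. P j} \<longleftrightarrow> j = b (l - 1) + 1"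
    by (rule boundaries_before_elements[of "{j\<in>{1..n}. P j}" n]) (use assms in auto)
  define ns where "ns l = b l - b (l - 1)" for l
  have partial: "(\<Sum>i=1..l. ns i) = b l" if "l \<le> q" for l
    using that
  proof (induction l)
    case (Suc l)
    then show ?case
      using b_less[of l] by (simp add: sum.cl_ivl_Suc ns_def)
  qed (simp add: q(2))
  have b_le: "b l \<le> n" if "l \<le> q" for l
    using that
  proof (induction l rule: inc_induct)
    case (step l)
    then show ?case
      using b_less[of l] by simp
  qed (simp add: q(3))
  show ?thesis
  proof (rule that[of q ns])
    show "\<forall>l\<in>{1..q}. 0 < ns l"
    proof
      fix l assume "l \<in> {1..q}"
      then show "0 < ns l"
        using b_less[of "l - 1"] by (auto simp: ns_def)
    qed
  next
    show "P ((\<Sum>i=1..l-1. ns i) + 1)" if "l \<in> {1..q}" for l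
    proof -
      have "b (l - 1) < b l"
        using that b_less[of "l - 1"] by auto
      then show ?thesis
        using that blocks[OF that, of "b (l - 1) + 1"] b_le[of l] partial[of "l - 1"] by auto
    qed
  next
    show "\<not> P j" if "l \<in> {1..q}" "(\<Sum>i=1..l-1. ns i) + 1 < j" "j \<le> (\<Sum>i=1..l. ns i)" for l j
      using that blocks[OF that(1), of j] b_le[of l] partial[of l] partial[of "l - 1"] by auto
  qed (use q partial in auto)
qed

lemma indep_vars_ray_increments:
  assumes BM: "radial_brownian_motion M B"
    and sorted: "\<And>i j. 1 \<le> i \<Longrightarrow> i \<le> j \<Longrightarrow> j \<le> n \<Longrightarrow> ray_key (x i) \<le> ray_key (x j)"
  shows "prob_space.indep_vars M (\<lambda>_. borel)
           (\<lambda>j \<omega>. B (x j) \<omega> - (if ray_start x j then 0 else B (x (j - 1)) \<omega>)) {1..n}"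
proof -
  have G: "centered_gaussian_process M B radial_cov"
    using BM by (simp add: radial_brownian_motion_def radial_cov_def[abs_def])
  define c where "c j k = (if k = 0 then 1 else if ray_start x j then 0 else - 1 :: real)" for j k :: nat
  define p where "p j k = x (j - k)" for j k :: nat
  define cov where "cov j j' = (\<Sum>k\<in>{0, 1}. \<Sum>k'\<in>{0, 1}. c j k * c j' k' * radial_cov (p j k) (p j' k'))"
    for j j'
  have cov_expand: "cov j j' = (radial_cov (x j) (x j')
        - (if ray_start x j' then 0 else radial_cov (x j) (x (j' - 1))))
      - (if ray_start x j then 0 else radial_cov (x (j - 1)) (x j')
        - (if ray_start x j' then 0 else radial_cov (x (j - 1)) (x (j' - 1))))" for j j'
    by (simp add: cov_def c_def p_def)
  \<comment> \<open>Both brackets vanish by the step rule for the covariance of a sorted sequence.\<close>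
  have lt: "cov j j' = 0" if "1 \<le> j" "j < j'" "j' \<le> n" for j j'
    using that radial_cov_sorted_step[where x=x and n=n and i=j and j=j', OF sorted]
      radial_cov_sorted_step[where x=x and n=n and i="j - 1" and j=j', OF sorted]
    by (auto simp: cov_expand ray_start_def)
  have sym: "cov j j' = cov j' j" for j j'
    by (simp add: cov_def radial_cov_commute algebra_simps sum.swap[of _ "{0, 1}"])
  have "cov j j' = 0" if "j \<in> {1..n}" "j' \<in> {1..n}" "j \<noteq> j'" for j j'
    using that lt[of j j'] lt[of j' j] sym[of j j'] by (cases "j < j'") auto
  then have "prob_space.indep_vars M (\<lambda>_. borel) (\<lambda>j \<omega>. \<Sum>k\<in>{0, 1}. c j k * B (p j k) \<omega>) {1..n}"
    by (intro indep_vars_uncorrelated_gaussian[OF G]) (auto simp: cov_def)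
  moreover have "(\<lambda>j \<omega>. \<Sum>k\<in>{0, 1}. c j k * B (p j k) \<omega>)
      = (\<lambda>j \<omega>. B (x j) \<omega> - (if ray_start x j then 0 else B (x (j - 1)) \<omega>))"
    by (simp add: fun_eq_iff c_def p_def)
  ultimately show ?thesis
    by simp
qed

lemma ray_sorting_with_indep_increments:
  assumes "radial_brownian_motion M B"
  obtains \<sigma> where "\<sigma> permutes {1..n}"
    "prob_space.indep_vars M (\<lambda>_. borel)
       (\<lambda>j \<omega>. B (A (\<sigma> j)) \<omega> - (if ray_start (A \<circ> \<sigma>) j then 0 else B (A (\<sigma> (j - 1))) \<omega>)) {1..n}"
proof -
  obtain \<sigma> where "\<sigma> permutes {1..n}"
    and "\<forall>i j. 1 \<le> i \<longrightarrow> i \<le> j \<longrightarrow> j \<le> n \<longrightarrow> ray_key (A (\<sigma> i)) \<le> ray_key (A (\<sigma> j))"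
    using exists_sorting_permutation[of n "\<lambda>j. ray_key (A j)"] by blast
  then show ?thesis
    using that indep_vars_ray_increments[OF assms, of n "A \<circ> \<sigma>"] unfolding comp_def by simp
qed

lemma (in prob_space) indep_vars_increments_in_block:
  fixes W :: "nat \<Rightarrow> 'a \<Rightarrow> real" and s e n :: nat
  assumes indep: "indep_vars (\<lambda>_. borel) (\<lambda>j \<omega>. W j \<omega> - (if P j then 0 else W (j - 1) \<omega>)) {1..n}"
    and "e \<le> n" "P (s + 1)" "\<And>j. s + 1 < j \<Longrightarrow> j \<le> e \<Longrightarrow> \<not> P j"
  shows "indep_vars (\<lambda>_. borel) (\<lambda>j \<omega>. if j = s then W (s + 1) \<omega> else W (j + 1) \<omega> - W j \<omega>) {s..<e}"
proof -
  have "indep_vars (\<lambda>_. borel) (\<lambda>j \<omega>. W j \<omega> - (if P j then 0 else W (j - 1) \<omega>)) (Suc ` {s..<e})"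
    using assms(2) by (intro indep_vars_subset[OF indep]) auto
  from indep_vars_reindex[OF this] show ?thesis
    by (rule indep_vars_cong[THEN iffD1, rotated 3]) (use assms(3,4) in auto)
qed

lemma (in prob_space) indep_vars_blocks_of_increments:
  fixes W :: "nat \<Rightarrow> 'a \<Rightarrow> real" and N :: "nat \<Rightarrow> nat" and n q :: nat
  assumes indep: "indep_vars (\<lambda>_. borel) (\<lambda>j \<omega>. W j \<omega> - (if P j then 0 else W (j - 1) \<omega>)) {1..n}"
    and "mono N" "N q \<le> n"
    and start: "\<And>l. l \<in> {1..q} \<Longrightarrow> P (N (l - 1) + 1)"
    and inner: "\<And>l j. l \<in> {1..q} \<Longrightarrow> N (l - 1) + 1 < j \<Longrightarrow> j \<le> N l \<Longrightarrow> \<not> P j"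
  shows "indep_vars (\<lambda>l. \<Pi>\<^sub>M j\<in>{N (l - 1) + 1..N l}. borel)
           (\<lambda>l \<omega>. \<lambda>j\<in>{N (l - 1) + 1..N l}. W j \<omega>) {1..q}"
proof -
  let ?Z = "\<lambda>j \<omega>. W j \<omega> - (if P j then 0 else W (j - 1) \<omega>)"
  let ?K = "\<lambda>l. {N (l - 1) + 1..N l}"
  have "disjoint_family_on ?K {1..q}"
    unfolding disjoint_family_on_def
  proof (intro ballI impI)
    fix l l' assume "l \<in> {1..q}" "l' \<in> {1..q}" "l \<noteq> l'"
    then have "N l \<le> N (l' - 1) \<or> N l' \<le> N (l - 1)"
      using \<open>mono N\<close> by (cases "l < l'") (auto intro: monoD)
    then show "?K l \<inter> ?K l' = {}"
      by auto
  qed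
  moreover have "?K l \<subseteq> {1..n}" if "l \<in> {1..q}" for l
    using that monoD[OF \<open>mono N\<close>, of l q] \<open>N q \<le> n\<close> by auto
  ultimately have blocks: "indep_vars (\<lambda>l. \<Pi>\<^sub>M j\<in>?K l. borel) (\<lambda>l \<omega>. \<lambda>j\<in>?K l. ?Z j \<omega>) {1..q}"
    by (intro indep_vars_restrict[OF indep]) auto
  \<comment> \<open>Within a block the partial sums of the increments telescope back to \<open>W\<close>.\<close>
  define Y where "Y l v = (\<lambda>j\<in>?K l. \<Sum>i\<in>{N (l - 1) + 1..j}. v i)" for l and v :: "nat \<Rightarrow> real"
  have "Y l \<in> (\<Pi>\<^sub>M j\<in>?K l. borel) \<rightarrow>\<^sub>M (\<Pi>\<^sub>M j\<in>?K l. borel)" for l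
    unfolding Y_def by (intro measurable_restrict borel_measurable_sum measurable_component_singleton)
      auto
  from indep_vars_compose2[OF blocks this] show ?thesis
  proof (rule indep_vars_cong[THEN iffD1, rotated 3])
    fix l assume l: "l \<in> {1..q}"
    have "(\<Sum>i\<in>{N (l - 1) + 1..j}. ?Z i \<omega>) = W j \<omega>" if "j \<in> ?K l" for j \<omega>
      using that start[OF l] inner[OF l] by (intro sum_diff_telescope_if_start) auto
    then show "(\<lambda>\<omega>. Y l (\<lambda>j\<in>?K l. ?Z j \<omega>)) = (\<lambda>\<omega>. \<lambda>j\<in>?K l. W j \<omega>)"
      by (auto simp: Y_def fun_eq_iff intro!: restrict_ext sum.cong)
  qed auto
qed

theorem proposition4p3:
  fixes M :: "'a measure" and B :: "real^2 \<Rightarrow> 'a \<Rightarrow> real"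
    and A :: "nat \<Rightarrow> real^2" and n :: nat
  assumes BM: "radial_brownian_motion M B"
    and n: "n \<ge> 1"
  shows "\<exists>(\<sigma>::nat \<Rightarrow> nat) (q::nat) (ns::nat \<Rightarrow> nat).
    \<sigma> permutes {1..n} \<and> q \<ge> 1 \<and> (\<forall>l\<in>{1..q}. ns l > 0) \<and> (\<Sum>l=1..q. ns l) = n \<and>
    (let N = (\<lambda>l. \<Sum>i=1..l. ns i) in
      prob_space.indep_vars M (\<lambda>l. \<Pi>\<^sub>M j\<in>{N (l - 1) + 1..N l}. (borel :: real measure))
        (\<lambda>l \<omega>. \<lambda>j\<in>{N (l - 1) + 1..N l}. B (A (\<sigma> j)) \<omega>) {1..q} \<and>
      (\<forall>l\<in>{1..q}.
        prob_space.indep_vars M (\<lambda>_. (borel :: real measure))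
          (\<lambda>j \<omega>. if j = N (l - 1) then B (A (\<sigma> (N (l - 1) + 1))) \<omega>
                  else B (A (\<sigma> (j + 1))) \<omega> - B (A (\<sigma> j)) \<omega>)
          {N (l - 1)..<N l}))"
proof -
  interpret prob_space M
    using BM by (simp add: radial_brownian_motion_def centered_gaussian_process_def)
  obtain \<sigma> where \<sigma>: "\<sigma> permutes {1..n}" and indep: "indep_vars (\<lambda>_. borel)
      (\<lambda>j \<omega>. B (A (\<sigma> j)) \<omega> - (if ray_start (A \<circ> \<sigma>) j then 0 else B (A (\<sigma> (j - 1))) \<omega>)) {1..n}"
    by (rule ray_sorting_with_indep_increments[OF BM]) (rule that)
  obtain q :: nat and ns :: "nat \<Rightarrow> nat" where q: "q \<ge> 1" "\<forall>l\<in>{1..q}. ns l > 0" "(\<Sum>l=1..q. ns l) = n"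
    and start: "\<And>l. l \<in> {1..q} \<Longrightarrow> ray_start (A \<circ> \<sigma>) ((\<Sum>i=1..l-1. ns i) + 1)"
    and inner: "\<And>l j. l \<in> {1..q} \<Longrightarrow> (\<Sum>i=1..l-1. ns i) + 1 < j \<Longrightarrow> j \<le> (\<Sum>i=1..l. ns i) \<Longrightarrow>
      \<not> ray_start (A \<circ> \<sigma>) j"
    by (rule interval_partition_at_starts[where P="ray_start (A \<circ> \<sigma>)", OF n ray_start_1]) (rule that)
  have mono: "mono (\<lambda>l. \<Sum>i=1..l. ns i)"
    by (intro monoI sum_mono2) auto
  have "indep_vars (\<lambda>l. \<Pi>\<^sub>M j\<in>{(\<Sum>i=1..l-1. ns i) + 1..\<Sum>i=1..l. ns i}. borel)
      (\<lambda>l \<omega>. \<lambda>j\<in>{(\<Sum>i=1..l-1. ns i) + 1..\<Sum>i=1..l. ns i}. B (A (\<sigma> j)) \<omega>) {1..q}"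
    using indep_vars_blocks_of_increments[OF indep mono _ start inner] q(3) by simp
  moreover have "indep_vars (\<lambda>_. borel)
      (\<lambda>j \<omega>. if j = (\<Sum>i=1..l-1. ns i) then B (A (\<sigma> ((\<Sum>i=1..l-1. ns i) + 1))) \<omega>
              else B (A (\<sigma> (j + 1))) \<omega> - B (A (\<sigma> j)) \<omega>) {\<Sum>i=1..l-1. ns i..<\<Sum>i=1..l. ns i}"
    if "l \<in> {1..q}" for l
    using indep_vars_increments_in_block[OF indep _ start[OF that] inner[OF that]]
      monoD[OF mono, of l q] that q(3) by simp
  ultimately show ?thesis
    using \<sigma> q unfolding Let_def by blast
qed

end
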